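(* Let $R$ be a commutative ring in which $2$ is invertible, $I$ an ideal of $R$, let $Q=R$ with quadratic form $q(z)=z^2$, and let $m\ge1$. Identify automorphisms of $Q\perp\mathbb{H}(R)^m$ with matrices in $\mathrm{GL}_{2m+1}(R)$ via the ordered basis $(1,x_1,f_1,\dots,x_m,f_m)$. Then $\mathrm{EO}_{(R,I)}(Q,\mathbb{H}(R)^m)=\mathrm{EO}_{2m+1}(R,I)$.
   Context: For a quadratic form $q$ the bilinear form is $\langle x,y\rangle=q(x+y)-q(x)-q(y)$; on $Q=R$, $\langle z,z'\rangle=2zz'$. $\mathbb{H}(R)^m=\mathbb{H}(R^m)=R^m\oplus(R^m)^*$ with basis $x_1,\dots,x_m$, dual basis $f_1,\dots,f_m$, and $q(y,g)=g(y)$; orthogonal sums carry the sum of forms. With respect to the basis above the form has matrix $(2)\perp\widetilde{\psi}_m$, where $\widetilde{\psi}_s=\sum_{i=1}^s(e_{2i-1,2i}+e_{2i,2i-1})$ and $e_{i,j}$ are matrix units. DSER transformations on $Q\perp\mathbb{H}(P)$: for $\alpha:Q\to P$ let $\alpha^*:P^*\to Q$ satisfy $\langle\alpha^*(g),z\rangle=g(\alpha(z))$, $E_\alpha(z,y,g)=(z-\alpha^*(g),y+\alpha(z)-\tfrac12\alpha\alpha^*(g),g)$; for $\beta:Q\to P^*$ let $\beta^*:P\to Q$ satisfy $\langle\beta^*(y),z\rangle=\beta(z)(y)$, $E^*_\beta(z,y,g)=(z-\beta^*(y),y,g+\beta(z)-\tfrac12\beta\beta^*(y))$. $\mathrm{EO}_R(Q,\mathbb{H}(P))$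 is generated by all $E_\alpha,E^*_\beta$; $\mathrm{EO}_I(Q,\mathbb{H}(P))$ by those with $\alpha(Q)\subseteq IP$, $\beta(Q)\subseteq IP^*$; $\mathrm{EO}_{(R,I)}(Q,\mathbb{H}(P))$ is the normal closure of $\mathrm{EO}_I(Q,\mathbb{H}(P))$ in $\mathrm{EO}_R(Q,\mathbb{H}(P))$. Odd elementary orthogonal group: for $N=2s+1$ and $1\le i\le s$, $F^1_i(\lambda)=I_N+\lambda(e_{1,2i+1}-2e_{2i,1}-\lambda e_{2i,2i+1})$, $F^2_i(\lambda)=I_N+\lambda(e_{1,2i}-2e_{2i+1,1}-\lambda e_{2i+1,2i})$. $\mathrm{EO}_{2s+1}(R)$ is generated by these with $\lambda\in R$, $\mathrm{EO}_{2s+1}(I)$ by those with $\lambda\in I$, and $\mathrm{EO}_{2s+1}(R,I)$ is the normal closure of $\mathrm{EO}_{2s+1}(I)$ in $\mathrm{EO}_{2s+1}(R)$. *)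

theory Defs
  imports "Jordan_Normal_Form.Matrix"
begin

definition is_ideal :: "'a::comm_ring_1 set \<Rightarrow> bool" where
  "is_ideal I \<longleftrightarrow> 0 \<in> I \<and> (\<forall>x\<in>I. \<forall>y\<in>I. x + y \<in> I) \<and> (\<forall>r x. x \<in> I \<longrightarrow> r * x \<in> I)"

definition qQ :: "'a::comm_ring_1 \<Rightarrow> 'a" where
  "qQ z = z * z"

definition bilQ :: "'a::comm_ring_1 \<Rightarrow> 'a \<Rightarrow> 'a" where
  "bilQ z z' = qQ (z + z') - qQ z - qQ z'"

text \<open>P = R^m: vectors y :: nat => 'a with coordinates y i, i in {1..m}, zero elsewhere
  (coordinates w.r.t. x_1..x_m).  Elements of P^* are represented by their
  coordinates g i = g(x_i) w.r.t. the dual basis f_1..f_m, also supported on {1..m}.\<close>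
definition Pm :: "nat \<Rightarrow> (nat \<Rightarrow> 'a::zero) set" where
  "Pm m = {y. \<forall>i. i \<notin> {1..m} \<longrightarrow> y i = 0}"

definition pair :: "nat \<Rightarrow> (nat \<Rightarrow> 'a::comm_ring_1) \<Rightarrow> (nat \<Rightarrow> 'a) \<Rightarrow> 'a" where
  "pair m g y = (\<Sum>i=1..m. g i * y i)"

definition lin_map :: "nat \<Rightarrow> ('a::comm_ring_1 \<Rightarrow> (nat \<Rightarrow> 'a)) \<Rightarrow> bool" where
  "lin_map m \<alpha> \<longleftrightarrow> (\<forall>z. \<alpha> z \<in> Pm m) \<and>
     (\<forall>r z z'. \<alpha> (r * z + z') = (\<lambda>i. r * \<alpha> z i + \<alpha> z' i))"

definition adj_alpha :: "nat \<Rightarrow> ('a::comm_ring_1 \<Rightarrow> (nat \<Rightarrow> 'a)) \<Rightarrow> (nat \<Rightarrow> 'a) \<Rightarrow> 'a" where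
  "adj_alpha m \<alpha> g = (THE w. \<forall>z. bilQ w z = pair m g (\<alpha> z))"

definition adj_beta :: "nat \<Rightarrow> ('a::comm_ring_1 \<Rightarrow> (nat \<Rightarrow> 'a)) \<Rightarrow> (nat \<Rightarrow> 'a) \<Rightarrow> 'a" where
  "adj_beta m \<beta> y = (THE w. \<forall>z. bilQ w z = pair m (\<beta> z) y)"

text \<open>The element 1/2 of R (2 is assumed invertible).\<close>
definition half :: "'a::comm_ring_1" where
  "half = (THE u. 2 * u = 1)"

type_synonym 'a qelem = "'a \<times> (nat \<Rightarrow> 'a) \<times> (nat \<Rightarrow> 'a)"

definition E_alpha :: "nat \<Rightarrow> ('a::comm_ring_1 \<Rightarrow> (nat \<Rightarrow> 'a)) \<Rightarrow> 'a qelem \<Rightarrow> 'a qelem" where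
  "E_alpha m \<alpha> v = (case v of (z, y, g) \<Rightarrow>
     (z - adj_alpha m \<alpha> g,
      (\<lambda>i. y i + \<alpha> z i - half * \<alpha> (adj_alpha m \<alpha> g) i),
      g))"

definition E_beta :: "nat \<Rightarrow> ('a::comm_ring_1 \<Rightarrow> (nat \<Rightarrow> 'a)) \<Rightarrow> 'a qelem \<Rightarrow> 'a qelem" where
  "E_beta m \<beta> v = (case v of (z, y, g) \<Rightarrow>
     (z - adj_beta m \<beta> y,
      y,
      (\<lambda>i. g i + \<beta> z i - half * \<beta> (adj_beta m \<beta> y) i)))"

text \<open>Ordered basis, 0-based: index 0 is 1 \<in> Q, index 2i-1 is x_i, index 2i is f_i.\<close>
definition basis_el :: "nat \<Rightarrow> 'a::comm_ring_1 qelem" where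
  "basis_el j = (if j = 0 then (1, (\<lambda>_. 0), (\<lambda>_. 0))
                 else if odd j then (0, (\<lambda>i. if i = (j + 1) div 2 then 1 else 0), (\<lambda>_. 0))
                 else (0, (\<lambda>_. 0), (\<lambda>i. if i = j div 2 then 1 else 0)))"

definition coord :: "nat \<Rightarrow> 'a::comm_ring_1 qelem \<Rightarrow> 'a" where
  "coord j v = (case v of (z, y, g) \<Rightarrow>
     (if j = 0 then z else if odd j then y ((j + 1) div 2) else g (j div 2)))"

definition mat_of_map :: "nat \<Rightarrow> ('a::comm_ring_1 qelem \<Rightarrow> 'a qelem) \<Rightarrow> 'a mat" where
  "mat_of_map m \<phi> = mat (2*m+1) (2*m+1) (\<lambda>(i, j). coord i (\<phi> (basis_el j)))"

inductive_set gen_grp :: "nat \<Rightarrow> 'a::comm_ring_1 mat set \<Rightarrow> 'a mat set" for n S where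
  gen_one: "1\<^sub>m n \<in> gen_grp n S"
| gen_mul: "A \<in> S \<Longrightarrow> X \<in> gen_grp n S \<Longrightarrow> A * X \<in> gen_grp n S"
| gen_inv: "A \<in> S \<Longrightarrow> B \<in> carrier_mat n n \<Longrightarrow> A * B = 1\<^sub>m n \<Longrightarrow> B * A = 1\<^sub>m n \<Longrightarrow>
            X \<in> gen_grp n S \<Longrightarrow> B * X \<in> gen_grp n S"

definition normal_closure :: "nat \<Rightarrow> 'a::comm_ring_1 mat set \<Rightarrow> 'a mat set \<Rightarrow> 'a mat set" where
  "normal_closure n G H = gen_grp n {g * h * g' | g h g'. g \<in> G \<and> h \<in> H \<and>
       g' \<in> carrier_mat n n \<and> g * g' = 1\<^sub>m n \<and> g' * g = 1\<^sub>m n}"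

definition EO_DSER :: "nat \<Rightarrow> 'a::comm_ring_1 set \<Rightarrow> 'a mat set" where
  "EO_DSER m J = gen_grp (2*m+1)
     ({mat_of_map m (E_alpha m \<alpha>) | \<alpha>. lin_map m \<alpha> \<and> (\<forall>z i. \<alpha> z i \<in> J)} \<union>
      {mat_of_map m (E_beta m \<beta>) | \<beta>. lin_map m \<beta> \<and> (\<forall>z i. \<beta> z i \<in> J)})"

definition EO_DSER_rel :: "nat \<Rightarrow> 'a::comm_ring_1 set \<Rightarrow> 'a mat set" where
  "EO_DSER_rel m I = normal_closure (2*m+1) (EO_DSER m UNIV) (EO_DSER m I)"

text \<open>Matrix unit e_{a,b} with 1-based indices a, b.\<close>
definition emat :: "nat \<Rightarrow> nat \<Rightarrow> nat \<Rightarrow> 'a::comm_ring_1 mat" where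
  "emat N a b = mat N N (\<lambda>(i, j). if i = a - 1 \<and> j = b - 1 then 1 else 0)"

definition F1 :: "nat \<Rightarrow> nat \<Rightarrow> 'a::comm_ring_1 \<Rightarrow> 'a mat" where
  "F1 N i l = 1\<^sub>m N + l \<cdot>\<^sub>m (emat N 1 (2*i+1) - 2 \<cdot>\<^sub>m emat N (2*i) 1 - l \<cdot>\<^sub>m emat N (2*i) (2*i+1))"

definition F2 :: "nat \<Rightarrow> nat \<Rightarrow> 'a::comm_ring_1 \<Rightarrow> 'a mat" where
  "F2 N i l = 1\<^sub>m N + l \<cdot>\<^sub>m (emat N 1 (2*i) - 2 \<cdot>\<^sub>m emat N (2*i+1) 1 - l \<cdot>\<^sub>m emat N (2*i+1) (2*i))"

definition EO_odd :: "nat \<Rightarrow> 'a::comm_ring_1 set \<Rightarrow> 'a mat set" where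
  "EO_odd s J = gen_grp (2*s+1)
     ({F1 (2*s+1) i l | i l. 1 \<le> i \<and> i \<le> s \<and> l \<in> J} \<union>
      {F2 (2*s+1) i l | i l. 1 \<le> i \<and> i \<le> s \<and> l \<in> J})"

definition EO_odd_rel :: "nat \<Rightarrow> 'a::comm_ring_1 set \<Rightarrow> 'a mat set" where
  "EO_odd_rel s I = normal_closure (2*s+1) (EO_odd s UNIV) (EO_odd s I)"

end

(* Since 2 is invertible, an R-linear map alpha : R --> R^m is z |-> z a with a = alpha(1), its
   adjoint is g |-> g(a)/2, and E_alpha, E*_beta become explicit maps determined by a vector
   a in R^m.  For a = c e_i their matrices are exactly F^1_i(-c/2) and F^2_i(-c/2), so every
   F-generator with parameter in an ideal J is a DSER generator over J.  Conversely a general a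
   is peeled off one coordinate at a time by E_(x+y) = E_x E_y E_(y/2) E_x E_(-y/2) E_(-x), so
   every DSER generator over J is a product of F-generators over J.  Hence the two elementary
   groups coincide for every ideal, in particular for I and for R, and so do their relative
   versions. *)

theory Submission
  imports Defs "HOL-Library.Product_Plus" "HOL-Library.Function_Algebras"
begin

section \<open>Groups generated by invertible matrices\<close>

definition invertible_mats :: "nat \<Rightarrow> 'a::comm_ring_1 mat set \<Rightarrow> bool" where
  "invertible_mats n S \<longleftrightarrow> S \<subseteq> carrier_mat n n \<and>
     (\<forall>A\<in>S. \<exists>B\<in>carrier_mat n n. A * B = 1\<^sub>m n \<and> B * A = 1\<^sub>m n)"

lemma gen_grp_carrier:
  assumes "S \<subseteq> carrier_mat n n" and "X \<in> gen_grp n S"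
  shows "X \<in> carrier_mat n n"
  using assms(2) by induction (use assms(1) in auto)

lemma gen_grp_generator: "A \<in> S \<Longrightarrow> A \<in> carrier_mat n n \<Longrightarrow> A \<in> gen_grp n S"
  using gen_grp.gen_mul[of A S "1\<^sub>m n" n] gen_grp.gen_one[of n S] by simp

lemma gen_grp_mult:
  assumes S: "S \<subseteq> carrier_mat n n" and X: "X \<in> gen_grp n S" and Y: "Y \<in> gen_grp n S"
  shows "X * Y \<in> gen_grp n S"
  using X
proof induction
  case gen_one
  then show ?case using Y gen_grp_carrier[OF S Y] by simp
next
  case (gen_mul A X)
  then have "A * X * Y = A * (X * Y)"
    using S gen_grp_carrier[OF S] Y by (intro assoc_mult_mat) auto
  then show ?case using gen_mul by (simp add: gen_grp.gen_mul)
next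
  case (gen_inv A B X)
  then have "B * X * Y = B * (X * Y)"
    using S gen_grp_carrier[OF S] Y by (intro assoc_mult_mat) auto
  then show ?case using gen_inv by (simp add: gen_grp.gen_inv)
qed

lemma inverse_mult_mat:
  fixes A A' X X' :: "'a::semiring_1 mat"
  assumes A: "A \<in> carrier_mat n n" "A' \<in> carrier_mat n n" "A * A' = 1\<^sub>m n" "A' * A = 1\<^sub>m n"
    and X: "X \<in> carrier_mat n n" "X' \<in> carrier_mat n n" "X * X' = 1\<^sub>m n" "X' * X = 1\<^sub>m n"
  shows "A * X * (X' * A') = 1\<^sub>m n" and "X' * A' * (A * X) = 1\<^sub>m n"
proof -
  have "A * X * (X' * A') = A * (X * X' * A')"
    using A(1,2) X(1,2) by (simp add: assoc_mult_mat[of _ n n _ n _ n])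
  also have "\<dots> = 1\<^sub>m n" using A X by simp
  finally show "A * X * (X' * A') = 1\<^sub>m n" .
  have "X' * A' * (A * X) = X' * (A' * A * X)"
    using A(1,2) X(1,2) by (simp add: assoc_mult_mat[of _ n n _ n _ n])
  also have "\<dots> = 1\<^sub>m n" using A X by simp
  finally show "X' * A' * (A * X) = 1\<^sub>m n" .
qed

lemma gen_grp_inverse:
  assumes S: "invertible_mats n S" and X: "X \<in> gen_grp n S"
  shows "\<exists>X'\<in>gen_grp n S. X * X' = 1\<^sub>m n \<and> X' * X = 1\<^sub>m n"
proof -
  have S_carrier: "S \<subseteq> carrier_mat n n" using S unfolding invertible_mats_def by blast
  from X show ?thesis
  proof induction
    case gen_one
    show ?case by (intro bexI[of _ "1\<^sub>m n"]) (auto intro: gen_grp.gen_one)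
  next
    case (gen_mul A X)
    from gen_mul.IH obtain X' where X': "X' \<in> gen_grp n S" "X * X' = 1\<^sub>m n" "X' * X = 1\<^sub>m n"
      by blast
    from S gen_mul.hyps(1) obtain B where B: "B \<in> carrier_mat n n" "A * B = 1\<^sub>m n" "B * A = 1\<^sub>m n"
      unfolding invertible_mats_def by blast
    have "B \<in> gen_grp n S"
      using gen_grp.gen_inv[OF gen_mul.hyps(1) B gen_grp.gen_one] B by simp
    then have "X' * B \<in> gen_grp n S" using gen_grp_mult[OF S_carrier X'(1)] by blast
    then show ?case
      using inverse_mult_mat[of A n B X X'] B X' gen_mul S_carrier gen_grp_carrier[OF S_carrier]
      by blast
  next
    case (gen_inv A B X)
    from gen_inv.IH obtain X' where X': "X' \<in> gen_grp n S" "X * X' = 1\<^sub>m n" "X' * X = 1\<^sub>m n"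
      by blast
    have "X' * A \<in> gen_grp n S"
      using gen_grp_mult[OF S_carrier X'(1) gen_grp_generator] gen_inv.hyps(1) S_carrier by blast
    then show ?case
      using inverse_mult_mat[of B n A X X'] X' gen_inv S_carrier gen_grp_carrier[OF S_carrier]
      by blast
  qed
qed

lemma gen_grp_mono:
  assumes "S \<subseteq> T"
  shows "gen_grp n S \<subseteq> gen_grp n T"
proof
  fix X assume "X \<in> gen_grp n S"
  then show "X \<in> gen_grp n T"
  proof induction
    case gen_one
    show ?case by (rule gen_grp.gen_one)
  next
    case (gen_mul A X)
    then show ?case using assms by (blast intro: gen_grp.gen_mul)
  next
    case (gen_inv A B X)
    then show ?case using assms by (blast intro: gen_grp.gen_inv)
  qed
qed

lemma gen_grp_subset_gen_grp:
  assumes T: "invertible_mats n T" and S: "S \<subseteq> carrier_mat n n" "S \<subseteq> gen_grp n T"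
  shows "gen_grp n S \<subseteq> gen_grp n T"
proof
  have T_carrier: "T \<subseteq> carrier_mat n n" using T unfolding invertible_mats_def by blast
  fix X assume "X \<in> gen_grp n S"
  then show "X \<in> gen_grp n T"
  proof induction
    case gen_one
    show ?case by (rule gen_grp.gen_one)
  next
    case (gen_mul A X)
    then show ?case using gen_grp_mult[OF T_carrier] S by blast
  next
    case (gen_inv A B X)
    then have "A \<in> gen_grp n T" using S by blast
    then obtain A' where A': "A' \<in> gen_grp n T" "A * A' = 1\<^sub>m n"
      using gen_grp_inverse[OF T] by blast
    have A_carrier: "A \<in> carrier_mat n n" "A' \<in> carrier_mat n n"
      using \<open>A \<in> gen_grp n T\<close> A'(1) gen_grp_carrier[OF T_carrier] by auto
    have "B = B * (A * A')" using A' gen_inv by simp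
    also have "\<dots> = B * A * A'"
      by (rule assoc_mult_mat[symmetric]) (use A_carrier gen_inv in auto)
    also have "\<dots> = A'" using A_carrier gen_inv by simp
    finally show ?case using gen_grp_mult[OF T_carrier A'(1) gen_inv.IH] by simp
  qed
qed

section \<open>Coordinates and matrices of linear maps\<close>

definition qspace :: "nat \<Rightarrow> 'a::comm_ring_1 qelem set" where
  "qspace m = UNIV \<times> Pm m \<times> Pm m"

definition qscale :: "'a::comm_ring_1 \<Rightarrow> 'a qelem \<Rightarrow> 'a qelem" where
  "qscale c = (\<lambda>(z, y, g). (c * z, \<lambda>i. c * y i, \<lambda>i. c * g i))"

definition qlinear :: "('a::comm_ring_1 qelem \<Rightarrow> 'a qelem) \<Rightarrow> bool" where
  "qlinear \<phi> \<longleftrightarrow> (\<forall>u v. \<phi> (u + v) = \<phi> u + \<phi> v) \<and> (\<forall>c v. \<phi> (qscale c v) = qscale c (\<phi> v))"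

lemma qscale_Pair [simp]: "qscale c (z, y, g) = (c * z, \<lambda>i. c * y i, \<lambda>i. c * g i)"
  by (simp add: qscale_def)

lemma sum_fun_eq: "(\<Sum>k\<in>A. f k) = (\<lambda>i. \<Sum>k\<in>A. f k i)"
  by (induction A rule: infinite_finite_induct) (simp_all add: fun_eq_iff)

lemma qlinearD:
  assumes "qlinear \<phi>"
  shows "\<phi> (u + v) = \<phi> u + \<phi> v" and "\<phi> (qscale c v) = qscale c (\<phi> v)"
  using assms unfolding qlinear_def by blast+

lemma qlinear_comp: "qlinear \<phi> \<Longrightarrow> qlinear \<psi> \<Longrightarrow> qlinear (\<phi> \<circ> \<psi>)"
  unfolding qlinear_def comp_def by metis

lemma qlinear_sum:
  assumes "qlinear \<phi>"
  shows "\<phi> (\<Sum>k\<in>A. f k) = (\<Sum>k\<in>A. \<phi> (f k))"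
proof -
  note add = qlinearD(1)[OF assms]
  then have "\<phi> 0 = 0"
    by (metis add.right_neutral add_left_cancel)
  with add show ?thesis
    using sum_comp_morphism[of \<phi> f A] by (simp add: comp_def)
qed

lemma coord_0 [simp]: "coord 0 (z, y, g) = z"
  by (simp add: coord_def)

(* One_nat_def would turn 2 * j - 1 into 2 * j - Suc 0; callers delete it from the simpset. *)
lemma coord_odd [simp]: "1 \<le> j \<Longrightarrow> coord (2 * j - 1) (z, y, g) = y j"
  by (auto simp: coord_def)

lemma coord_even [simp]: "1 \<le> j \<Longrightarrow> coord (2 * j) (z, y, g) = g j"
  by (simp add: coord_def)

lemma basis_el_eq:
  "basis_el k = (if k = 0 then 1 else 0,
     \<lambda>i. if 1 \<le> i \<and> k = 2 * i - 1 then 1 else 0, \<lambda>i. if 1 \<le> i \<and> k = 2 * i then 1 else 0)"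
  unfolding basis_el_def by (auto simp: fun_eq_iff; presburger)

lemma coord_basis_el: "coord k (basis_el j) = (if k = j then 1 else 0)"
  unfolding basis_el_eq coord_def by auto

lemma basis_el_qspace: "j < 2 * m + 1 \<Longrightarrow> basis_el j \<in> qspace m"
  unfolding basis_el_eq qspace_def Pm_def by auto

lemma basis_el_odd: "1 \<le> j \<Longrightarrow> basis_el (2 * j - 1) = (0, \<lambda>i. if i = j then 1 else 0, \<lambda>_. 0)"
  by (auto simp: basis_el_eq fun_eq_iff; presburger)

lemma basis_el_even: "1 \<le> j \<Longrightarrow> basis_el (2 * j) = (0, \<lambda>_. 0, \<lambda>i. if i = j then 1 else 0)"
  by (auto simp: basis_el_eq fun_eq_iff; presburger)

lemma basis_el_0: "basis_el 0 = (1, \<lambda>_. 0, \<lambda>_. 0)"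
  by (simp add: basis_el_def)

lemma basis_index_eq_iff:
  fixes j k :: nat
  assumes "1 \<le> j" "1 \<le> k"
  shows "2 * j - 1 = 2 * k - 1 \<longleftrightarrow> j = k" and "2 * j \<noteq> 2 * k - 1" and "2 * j - 1 \<noteq> 2 * k"
  using assms by presburger+

lemma basis_index_cases:
  fixes p m :: nat
  assumes "p < 2 * m + 1"
  obtains "p = 0"
    | j where "1 \<le> j" "j \<le> m" "p = 2 * j - 1"
    | j where "1 \<le> j" "j \<le> m" "p = 2 * j"
proof (cases "p = 0")
  case False
  show ?thesis
  proof (cases "odd p")
    case True
    then show ?thesis using False assms by (intro that(2)[of "(p + 1) div 2"]) presburger+
  next
    case False
    then show ?thesis using \<open>p \<noteq> 0\<close> assms by (intro that(3)[of "p div 2"]) presburger+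
  qed
qed (use that in blast)

lemma qspace_expansion:
  assumes "v \<in> qspace m"
  shows "(\<Sum>k<2*m+1. qscale (coord k v) (basis_el k)) = v"
proof -
  obtain z y g where v: "v = (z, y, g)" and y: "y \<in> Pm m" and g: "g \<in> Pm m"
    using assms unfolding qspace_def by auto
  have "(\<Sum>k<2*m+1. coord k v * (if 1 \<le> i \<and> k = 2 * i - 1 then 1 else 0)) = y i" for i
  proof -
    have "(\<Sum>k<2*m+1. coord k v * (if 1 \<le> i \<and> k = 2 * i - 1 then 1 else 0))
        = (\<Sum>k<2*m+1. if k = 2 * i - 1 then (if 1 \<le> i then y i else 0) else 0)"
      by (rule sum.cong) (auto simp: v simp del: One_nat_def)
    then show ?thesis using y by (auto simp: Pm_def)
  qed
  moreover have "(\<Sum>k<2*m+1. coord k v * (if 1 \<le> i \<and> k = 2 * i then 1 else 0)) = g i" for i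
  proof -
    have "(\<Sum>k<2*m+1. coord k v * (if 1 \<le> i \<and> k = 2 * i then 1 else 0))
        = (\<Sum>k<2*m+1. if k = 2 * i then (if 1 \<le> i then g i else 0) else 0)"
      by (rule sum.cong) (auto simp: v)
    then show ?thesis using g by (auto simp: Pm_def)
  qed
  moreover have "(\<Sum>k<2*m+1. coord k v * (if k = 0 then 1 else 0)) = z"
    by (simp add: v if_distrib sum.delta cong: if_cong)
  moreover have "(\<Sum>k<2*m+1. qscale (coord k v) (basis_el k))
      = (\<Sum>k<2*m+1. (coord k v * (if k = 0 then 1 else 0),
           \<lambda>i. coord k v * (if 1 \<le> i \<and> k = 2 * i - 1 then 1 else 0),
           \<lambda>i. coord k v * (if 1 \<le> i \<and> k = 2 * i then 1 else 0)))"
    by (intro sum.cong refl) (simp add: basis_el_eq)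
  ultimately show ?thesis
    unfolding sum_prod sum_fun_eq by (simp add: v)
qed

lemma coord_add: "coord i (u + v) = coord i u + coord i v"
  by (cases u; cases v) (simp add: coord_def)

lemma coord_qscale: "coord i (qscale c v) = c * coord i v"
  by (cases v) (simp add: coord_def)

lemma coord_sum: "coord i (\<Sum>k\<in>A. f k) = (\<Sum>k\<in>A. coord i (f k))"
proof -
  have "coord i 0 = 0" by (simp add: coord_def zero_prod_def)
  from sum_comp_morphism[of "coord i" f A, OF this coord_add] show ?thesis
    by (simp add: comp_def)
qed

lemma coord_qlinear:
  assumes "qlinear \<phi>" and "v \<in> qspace m"
  shows "coord i (\<phi> v) = (\<Sum>k<2*m+1. coord i (\<phi> (basis_el k)) * coord k v)"
proof -
  have "\<phi> v = \<phi> (\<Sum>k<2*m+1. qscale (coord k v) (basis_el k))"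
    using qspace_expansion[OF assms(2)] by simp
  also have "\<dots> = (\<Sum>k<2*m+1. \<phi> (qscale (coord k v) (basis_el k)))"
    by (rule qlinear_sum[OF assms(1)])
  also have "\<dots> = (\<Sum>k<2*m+1. qscale (coord k v) (\<phi> (basis_el k)))"
    by (simp add: qlinearD(2)[OF assms(1)])
  finally have "coord i (\<phi> v) = (\<Sum>k<2*m+1. coord k v * coord i (\<phi> (basis_el k)))"
    by (simp only: coord_sum coord_qscale)
  then show ?thesis by (simp only: mult.commute)
qed

lemma mat_of_map_comp:
  assumes "qlinear \<phi>" and "\<And>v. v \<in> qspace m \<Longrightarrow> \<psi> v \<in> qspace m"
  shows "mat_of_map m (\<phi> \<circ> \<psi>) = mat_of_map m \<phi> * mat_of_map m \<psi>"
proof (rule eq_matI)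
  fix i j
  assume "i < dim_row (mat_of_map m \<phi> * mat_of_map m \<psi>)"
    and "j < dim_col (mat_of_map m \<phi> * mat_of_map m \<psi>)"
  then have i: "i < 2*m+1" and j: "j < 2*m+1" by (auto simp: mat_of_map_def)
  show "mat_of_map m (\<phi> \<circ> \<psi>) $$ (i, j) = (mat_of_map m \<phi> * mat_of_map m \<psi>) $$ (i, j)"
    using i j coord_qlinear[OF assms(1) assms(2)[OF basis_el_qspace[OF j]], of i]
    by (simp add: mat_of_map_def scalar_prod_def atLeast0LessThan)
qed (auto simp: mat_of_map_def)

lemma mat_of_map_id: "mat_of_map m id = 1\<^sub>m (2*m+1)"
  by (rule eq_matI) (auto simp: mat_of_map_def coord_basis_el)

section \<open>The transvections E_alpha and E*_beta\<close>

lemma pair_commute: "pair m g y = pair m y g"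
  by (simp add: pair_def mult.commute)

lemma pair_add_right: "pair m g (\<lambda>i. x i + y i) = pair m g x + pair m g y"
  by (simp add: pair_def distrib_left sum.distrib)

lemma pair_scale_right: "pair m g (\<lambda>i. c * x i) = c * pair m g x"
  by (simp add: pair_def sum_distrib_left algebra_simps)

lemma pair_minus_right: "pair m g (\<lambda>i. - x i) = - pair m g x"
  by (simp add: pair_def sum_negf)

lemma pair_zero_right: "pair m g (\<lambda>_. 0) = 0"
  by (simp add: pair_def)

lemma pair_zero_left: "pair m (\<lambda>_. 0) y = 0"
  by (simp add: pair_def)

lemma pair_delta_left:
  assumes "j \<in> {1..m}"
  shows "pair m (\<lambda>i. if i = j then 1 else 0) y = y j"
proof -
  have "pair m (\<lambda>i. if i = j then 1 else 0) y = (\<Sum>i=1..m. if i = j then y i else 0)"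
    unfolding pair_def by (rule sum.cong) auto
  then show ?thesis using assms by simp
qed

lemma half_eq:
  assumes "\<exists>u::'a::comm_ring_1. 2 * u = 1"
  shows "2 * (half::'a) = 1"
proof -
  obtain u :: 'a where u: "2 * u = 1" using assms by blast
  have "v = u" if "2 * v = 1" for v :: 'a
  proof -
    have "v = v * (2 * u)" using u by simp
    also have "\<dots> = u * (2 * v)" by (simp add: algebra_simps)
    finally show "v = u" using that by simp
  qed
  with u have "\<exists>!u::'a. 2 * u = 1" by blast
  then show ?thesis unfolding half_def by (rule theI')
qed

lemma half_double:
  assumes "2 * half = (1::'a::comm_ring_1)"
  shows "half * (2 * x) = x" and "half * x * 2 = (x::'a)"
proof -
  have "half * (2 * x) = (2 * half) * x" and "half * x * 2 = (2 * half) * x"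
    by (simp_all add: algebra_simps)
  then show "half * (2 * x) = x" and "half * x * 2 = x" using assms by simp_all
qed

lemma eq_mod_two_half:
  fixes h :: "'a::comm_ring_1"
  assumes "2 * h = 1" and "L - R = (2 * h - 1) * C"
  shows "L = R"
  using assms by simp

(* E_alpha for alpha z = z a, with alpha^*(g) = half * g(a) substituted (see E_alpha_eq). *)
definition E_alpha_vec :: "nat \<Rightarrow> (nat \<Rightarrow> 'a::comm_ring_1) \<Rightarrow> 'a qelem \<Rightarrow> 'a qelem" where
  "E_alpha_vec m a = (\<lambda>(z, y, g).
     (z - half * pair m g a, \<lambda>i. y i + z * a i - half * half * pair m g a * a i, g))"

definition qswap :: "'a qelem \<Rightarrow> 'a qelem" where
  "qswap = (\<lambda>(z, y, g). (z, g, y))"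

(* Exchanging x_i and f_i turns E*_beta into E_alpha with the same vector (see E_beta_eq). *)
definition E_beta_vec :: "nat \<Rightarrow> (nat \<Rightarrow> 'a::comm_ring_1) \<Rightarrow> 'a qelem \<Rightarrow> 'a qelem" where
  "E_beta_vec m b = qswap \<circ> E_alpha_vec m b \<circ> qswap"

lemma E_alpha_vec_Pair:
  "E_alpha_vec m a (z, y, g) =
     (z - half * pair m g a, \<lambda>i. y i + z * a i - half * half * pair m g a * a i, g)"
  by (simp add: E_alpha_vec_def)

lemma qswap_Pair [simp]: "qswap (z, y, g) = (z, g, y)"
  by (simp add: qswap_def)

lemma qswap_qswap [simp]: "qswap (qswap v) = v"
  by (cases v) simp

lemma E_beta_vec_Pair:
  "E_beta_vec m b (z, y, g) =
     (z - half * pair m y b, y, \<lambda>i. g i + z * b i - half * half * pair m y b * b i)"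
  by (simp add: E_beta_vec_def E_alpha_vec_Pair)

lemma qlinear_E_alpha_vec: "qlinear (E_alpha_vec m a)"
  unfolding qlinear_def
  by (auto simp: E_alpha_vec_Pair pair_def sum.distrib sum_distrib_left algebra_simps fun_eq_iff)

lemma qlinear_qswap: "qlinear qswap"
  unfolding qlinear_def by auto

lemma qlinear_E_beta_vec: "qlinear (E_beta_vec m b)"
  unfolding E_beta_vec_def by (intro qlinear_comp qlinear_qswap qlinear_E_alpha_vec)

lemma E_alpha_vec_qspace: "a \<in> Pm m \<Longrightarrow> v \<in> qspace m \<Longrightarrow> E_alpha_vec m a v \<in> qspace m"
  by (auto simp: qspace_def Pm_def E_alpha_vec_def)

lemma E_beta_vec_qspace: "b \<in> Pm m \<Longrightarrow> v \<in> qspace m \<Longrightarrow> E_beta_vec m b v \<in> qspace m"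
  by (auto simp: qspace_def Pm_def E_beta_vec_def E_alpha_vec_def)

lemma E_alpha_vec_zero: "E_alpha_vec m (\<lambda>_. 0) = id"
  by (auto simp: E_alpha_vec_Pair pair_zero_right)

lemma E_beta_vec_zero: "E_beta_vec m (\<lambda>_. 0) = id"
  by (simp add: E_beta_vec_def E_alpha_vec_zero fun_eq_iff)

lemma E_alpha_vec_inverse:
  assumes h: "2 * half = (1::'a::comm_ring_1)"
  shows "E_alpha_vec m a (E_alpha_vec m (\<lambda>j. - a j) v) = (v :: 'a qelem)"
proof (cases v)
  case (fields z y g)
  show ?thesis
    unfolding fields
    apply (simp add: E_alpha_vec_Pair pair_minus_right fun_eq_iff)
    apply (intro allI)
    subgoal for i
      by (rule eq_mod_two_half[OF h, where C = "- half * pair m g a * a i"]) (simp add: algebra_simps)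
    done
qed

(* E_x E_y = E_(x+y) T, where T only adds half^2 (g(x) y - g(y) x) to the P-component;
   T is antisymmetric in x, y and commutes with every E_c, so the six defects cancel. *)
lemma E_alpha_vec_decomp:
  assumes h: "2 * half = (1::'a::comm_ring_1)"
  shows "E_alpha_vec m (\<lambda>j. x j + y j) =
    E_alpha_vec m x \<circ> E_alpha_vec m y \<circ> E_alpha_vec m (\<lambda>j. half * y j) \<circ> E_alpha_vec m x
    \<circ> E_alpha_vec m (\<lambda>j. - (half * y j)) \<circ> E_alpha_vec m (\<lambda>j. - (x j :: 'a))"
    (is "_ = ?rhs")
proof (rule ext)
  fix v :: "'a qelem"
  show "E_alpha_vec m (\<lambda>j. x j + y j) v = ?rhs v"
  proof (cases v)
    case (fields z u g)
    show ?thesis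
      unfolding fields
      apply (simp add: E_alpha_vec_Pair pair_add_right pair_scale_right pair_minus_right fun_eq_iff)
      apply (intro conjI allI)
       apply (simp add: algebra_simps)
      subgoal for i
        by (rule eq_mod_two_half[OF h, where C = "half * pair m g x * x i
          - half * pair m g y * x i + half * half * half * pair m g y * y i"]) (simp add: algebra_simps)
      done
  qed
qed

lemma E_beta_vec_inverse:
  assumes "2 * half = (1::'a::comm_ring_1)"
  shows "E_beta_vec m b (E_beta_vec m (\<lambda>j. - b j) v) = (v :: 'a qelem)"
  by (simp add: E_beta_vec_def E_alpha_vec_inverse[OF assms])

lemma E_beta_vec_decomp:
  assumes "2 * half = (1::'a::comm_ring_1)"
  shows "E_beta_vec m (\<lambda>j. x j + y j) =
    E_beta_vec m x \<circ> E_beta_vec m y \<circ> E_beta_vec m (\<lambda>j. half * y j) \<circ> E_beta_vec m x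
    \<circ> E_beta_vec m (\<lambda>j. - (half * y j)) \<circ> E_beta_vec m (\<lambda>j. - (x j :: 'a))"
  unfolding E_beta_vec_def E_alpha_vec_decomp[OF assms] by (simp add: fun_eq_iff)

lemma lin_map_eq:
  assumes "lin_map m \<alpha>"
  shows "\<alpha> = (\<lambda>z i. z * \<alpha> 1 i)"
proof
  fix z
  have lin: "\<alpha> (r * z + z') = (\<lambda>i. r * \<alpha> z i + \<alpha> z' i)" for r z z'
    using assms unfolding lin_map_def by blast
  have "\<alpha> 0 i = \<alpha> 0 i + \<alpha> 0 i" for i
    using fun_cong[OF lin[of 1 0 0], of i] by simp
  then have "\<alpha> 0 i = 0" for i by simp
  then show "\<alpha> z = (\<lambda>i. z * \<alpha> 1 i)"
    using lin[of z 1 0] by (simp only: mult_1_right add_0_right)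
qed

lemma the_bilQ_eq:
  assumes h: "2 * half = (1::'a::comm_ring_1)"
  shows "(THE w. \<forall>z. bilQ w z = z * c) = half * (c::'a)"
proof -
  have bilQ: "bilQ w z = 2 * w * z" for w z :: 'a
    by (simp add: bilQ_def qQ_def algebra_simps)
  show ?thesis
  proof (rule the_equality)
    show "\<forall>z. bilQ (half * c) z = z * c"
    proof
      fix z
      have "bilQ (half * c) z = (2 * half) * c * z" by (simp add: bilQ mult.assoc)
      also have "\<dots> = z * c" by (simp add: h)
      finally show "bilQ (half * c) z = z * c" .
    qed
  next
    fix w assume "\<forall>z. bilQ w z = z * c"
    then have "2 * w = c" using bilQ[of w 1] by simp
    then show "w = half * c" using h by (metis mult.assoc mult.commute mult_1)
  qed
qed

lemma E_alpha_eq: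
  assumes h: "2 * half = (1::'a::comm_ring_1)" and "lin_map m \<alpha>"
  shows "E_alpha m \<alpha> = E_alpha_vec m (\<alpha> (1::'a))"
proof -
  obtain a where \<alpha>: "\<alpha> = (\<lambda>z i. z * a i)"
    using lin_map_eq[OF assms(2)] by blast
  have "adj_alpha m (\<lambda>z i. z * a i) g = half * pair m g a" for g
    unfolding adj_alpha_def pair_scale_right by (rule the_bilQ_eq[OF h])
  then show ?thesis
    unfolding \<alpha> by (auto simp: E_alpha_def E_alpha_vec_Pair algebra_simps)
qed

lemma E_beta_eq:
  assumes h: "2 * half = (1::'a::comm_ring_1)" and "lin_map m \<beta>"
  shows "E_beta m \<beta> = E_beta_vec m (\<beta> (1::'a))"
proof -
  obtain b where \<beta>: "\<beta> = (\<lambda>z i. z * b i)"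
    using lin_map_eq[OF assms(2)] by blast
  have "adj_beta m (\<lambda>z i. z * b i) y = half * pair m y b" for y
    unfolding adj_beta_def pair_commute[of m "\<lambda>i. _ * b i"] pair_scale_right
    by (rule the_bilQ_eq[OF h])
  then show ?thesis
    unfolding \<beta> by (auto simp: E_beta_def E_beta_vec_Pair algebra_simps)
qed

lemma F1_index:
  assumes "p < N" "q < N"
  shows "F1 N i l $$ (p, q) = (if p = q then 1 else 0) + l * ((if p = 0 \<and> q = 2 * i then 1 else 0)
    - 2 * (if p = 2 * i - 1 \<and> q = 0 then 1 else 0) - l * (if p = 2 * i - 1 \<and> q = 2 * i then 1 else 0))"
  using assms by (simp add: F1_def emat_def)

lemma mat_of_map_E_alpha_vec_single:
  assumes h: "2 * half = (1::'a::comm_ring_1)" and i: "1 \<le> i" "i \<le> m"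
  shows "mat_of_map m (E_alpha_vec m (\<lambda>j. if j = i then c else 0)) = F1 (2*m+1) i (- (half * (c::'a)))"
proof (rule eq_matI)
  fix p q
  assume "p < dim_row (F1 (2*m+1) i (- (half * c)))" and "q < dim_col (F1 (2*m+1) i (- (half * c)))"
  then have p: "p < 2*m+1" and q: "q < 2*m+1" by (simp_all add: F1_def emat_def)
  from p q show "mat_of_map m (E_alpha_vec m (\<lambda>j. if j = i then c else 0)) $$ (p, q)
      = F1 (2*m+1) i (- (half * c)) $$ (p, q)"
    unfolding F1_index[OF p q]
    by (elim basis_index_cases)
      (use i half_double(2)[OF h, of c] in \<open>simp_all del: One_nat_def add: mat_of_map_def basis_el_0 basis_el_odd
        basis_el_even E_alpha_vec_Pair pair_zero_left pair_delta_left basis_index_eq_iff\<close>)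
qed (simp_all add: mat_of_map_def F1_def emat_def)

lemma F2_index:
  assumes "p < N" "q < N"
  shows "F2 N i l $$ (p, q) = (if p = q then 1 else 0) + l * ((if p = 0 \<and> q = 2 * i - 1 then 1 else 0)
    - 2 * (if p = 2 * i \<and> q = 0 then 1 else 0) - l * (if p = 2 * i \<and> q = 2 * i - 1 then 1 else 0))"
  using assms by (simp add: F2_def emat_def)

lemma mat_of_map_E_beta_vec_single:
  assumes h: "2 * half = (1::'a::comm_ring_1)" and i: "1 \<le> i" "i \<le> m"
  shows "mat_of_map m (E_beta_vec m (\<lambda>j. if j = i then c else 0)) = F2 (2*m+1) i (- (half * (c::'a)))"
proof (rule eq_matI)
  fix p q
  assume "p < dim_row (F2 (2*m+1) i (- (half * c)))" and "q < dim_col (F2 (2*m+1) i (- (half * c)))"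
  then have p: "p < 2*m+1" and q: "q < 2*m+1" by (simp_all add: F2_def emat_def)
  from p q show "mat_of_map m (E_beta_vec m (\<lambda>j. if j = i then c else 0)) $$ (p, q)
      = F2 (2*m+1) i (- (half * c)) $$ (p, q)"
    unfolding F2_index[OF p q]
    by (elim basis_index_cases)
      (use i half_double(2)[OF h, of c] in \<open>simp_all del: One_nat_def add: mat_of_map_def basis_el_0 basis_el_odd
        basis_el_even E_beta_vec_Pair pair_zero_left pair_delta_left basis_index_eq_iff\<close>)
qed (simp_all add: mat_of_map_def F2_def emat_def)

section \<open>Comparison of the generating sets\<close>

lemma ideal_mult: "is_ideal J \<Longrightarrow> x \<in> J \<Longrightarrow> r * x \<in> J"
  unfolding is_ideal_def by blast

lemma ideal_minus: "is_ideal J \<Longrightarrow> x \<in> J \<Longrightarrow> - x \<in> J"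
  using ideal_mult[of J x "- 1"] by simp

lemma Pm_mono: "k \<le> m \<Longrightarrow> Pm k \<subseteq> Pm m"
  by (auto simp: Pm_def)

lemma mat_of_map_invertible:
  fixes E :: "(nat \<Rightarrow> 'a::comm_ring_1) \<Rightarrow> 'a qelem \<Rightarrow> 'a qelem"
  assumes linear: "\<And>a. qlinear (E a)"
    and inverse: "\<And>a v. E a (E (\<lambda>j. - a j) v) = v"
    and closed: "\<And>a v. a \<in> Pm m \<Longrightarrow> v \<in> qspace m \<Longrightarrow> E a v \<in> qspace m"
    and a: "a \<in> Pm m"
  shows "\<exists>B\<in>carrier_mat (2*m+1) (2*m+1).
    mat_of_map m (E a) * B = 1\<^sub>m (2*m+1) \<and> B * mat_of_map m (E a) = 1\<^sub>m (2*m+1)"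
proof (intro bexI conjI)
  have "(\<lambda>j. - a j) \<in> Pm m" using a by (simp add: Pm_def)
  moreover have "E a \<circ> E (\<lambda>j. - a j) = id" "E (\<lambda>j. - a j) \<circ> E a = id"
    using inverse[of a] inverse[of "\<lambda>j. - a j"] by (simp_all add: fun_eq_iff)
  ultimately show "mat_of_map m (E a) * mat_of_map m (E (\<lambda>j. - a j)) = 1\<^sub>m (2*m+1)"
    and "mat_of_map m (E (\<lambda>j. - a j)) * mat_of_map m (E a) = 1\<^sub>m (2*m+1)"
    using a by (simp_all add: mat_of_map_comp[OF linear closed, symmetric] mat_of_map_id)
qed (simp add: mat_of_map_def)

lemma mat_of_map_mem_by_singles:
  fixes E :: "(nat \<Rightarrow> 'a::comm_ring_1) \<Rightarrow> 'a qelem \<Rightarrow> 'a qelem" and G :: "'a mat set"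
  assumes J: "is_ideal J"
    and linear: "\<And>a. qlinear (E a)"
    and closed: "\<And>a v. a \<in> Pm m \<Longrightarrow> v \<in> qspace m \<Longrightarrow> E a v \<in> qspace m"
    and zero: "E (\<lambda>_. 0) = id"
    and decomp: "\<And>x y. E (\<lambda>j. x j + y j) = E x \<circ> E y \<circ> E (\<lambda>j. half * y j) \<circ> E x
      \<circ> E (\<lambda>j. - (half * y j)) \<circ> E (\<lambda>j. - x j)"
    and single: "\<And>i c. 1 \<le> i \<Longrightarrow> i \<le> m \<Longrightarrow> c \<in> J \<Longrightarrow>
      mat_of_map m (E (\<lambda>j. if j = i then c else 0)) \<in> G"
    and G_one: "1\<^sub>m (2*m+1) \<in> G" and G_mult: "\<And>A B. A \<in> G \<Longrightarrow> B \<in> G \<Longrightarrow> A * B \<in> G"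
    and a: "a \<in> Pm m" "\<And>j. a j \<in> J"
  shows "mat_of_map m (E a) \<in> G"
proof -
  have comp: "mat_of_map m (\<phi> \<circ> E b) = mat_of_map m \<phi> * mat_of_map m (E b)"
    if "qlinear \<phi>" "b \<in> Pm m" for \<phi> b
    using mat_of_map_comp[OF that(1) closed[OF that(2)]] .
  have "mat_of_map m (E a) \<in> G" if "k \<le> m" "a \<in> Pm k" "\<forall>j. a j \<in> J" for k a
    using that
  proof (induction k arbitrary: a)
    case 0
    then have "a = (\<lambda>_. 0)" by (auto simp: Pm_def)
    then have "E a = id" using zero by simp
    then show ?case by (simp only: mat_of_map_id G_one)
  next
    case (Suc k)
    define c where "c = a (Suc k)"
    define x where "x = a(Suc k := 0)"
    define y where "y = (\<lambda>j. if j = Suc k then c else (0::'a))"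
    have a_eq: "a = (\<lambda>j. x j + y j)" by (auto simp: x_def y_def c_def)
    have y_scale: "(\<lambda>j. half * y j) = (\<lambda>j. if j = Suc k then half * c else 0)"
      "(\<lambda>j. - (half * y j)) = (\<lambda>j. if j = Suc k then - (half * c) else 0)"
      by (auto simp: y_def)
    have c: "c \<in> J" "half * c \<in> J" "- (half * c) \<in> J"
      using Suc.prems(3) J by (auto simp: c_def intro: ideal_mult ideal_minus)
    have single_k: "mat_of_map m (E (\<lambda>j. if j = Suc k then c' else 0)) \<in> G" if "c' \<in> J" for c'
      using single Suc.prems(1) that by simp
    have y_mem: "mat_of_map m (E y) \<in> G" "mat_of_map m (E (\<lambda>j. half * y j)) \<in> G"
      "mat_of_map m (E (\<lambda>j. - (half * y j))) \<in> G"
      using single_k c unfolding y_scale by (auto simp: y_def)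
    have "x \<in> Pm k" "(\<lambda>j. - x j) \<in> Pm k" "\<forall>j. x j \<in> J" "\<forall>j. - x j \<in> J"
      using Suc.prems J ideal_mult[OF J, of _ 0]
      by (auto simp: x_def Pm_def intro: ideal_minus)
    then have x_mem: "mat_of_map m (E x) \<in> G" "mat_of_map m (E (\<lambda>j. - x j)) \<in> G"
      using Suc.IH Suc.prems(1) by auto
    have "Pm k \<subseteq> Pm m" using Suc.prems(1) by (intro Pm_mono) simp
    then have "x \<in> Pm m" "(\<lambda>j. - x j) \<in> Pm m"
      using \<open>x \<in> Pm k\<close> \<open>(\<lambda>j. - x j) \<in> Pm k\<close> by blast+
    moreover have "y \<in> Pm m" "(\<lambda>j. half * y j) \<in> Pm m" "(\<lambda>j. - (half * y j)) \<in> Pm m"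
      using Suc.prems(1) by (auto simp: y_def Pm_def)
    ultimately have "mat_of_map m (E a) = mat_of_map m (E x) * mat_of_map m (E y)
      * mat_of_map m (E (\<lambda>j. half * y j)) * mat_of_map m (E x)
      * mat_of_map m (E (\<lambda>j. - (half * y j))) * mat_of_map m (E (\<lambda>j. - x j))"
      unfolding a_eq decomp by (simp add: comp qlinear_comp linear)
    then show ?case using x_mem y_mem by (simp add: G_mult)
  qed
  then show ?thesis using a by blast
qed

definition dser_generators :: "nat \<Rightarrow> 'a::comm_ring_1 set \<Rightarrow> 'a mat set" where
  "dser_generators m J =
     {mat_of_map m (E_alpha m \<alpha>) | \<alpha>. lin_map m \<alpha> \<and> (\<forall>z i. \<alpha> z i \<in> J)} \<union>
     {mat_of_map m (E_beta m \<beta>) | \<beta>. lin_map m \<beta> \<and> (\<forall>z i. \<beta> z i \<in> J)}"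

definition odd_generators :: "nat \<Rightarrow> 'a::comm_ring_1 set \<Rightarrow> 'a mat set" where
  "odd_generators m J =
     {F1 (2*m+1) i l | i l. 1 \<le> i \<and> i \<le> m \<and> l \<in> J} \<union>
     {F2 (2*m+1) i l | i l. 1 \<le> i \<and> i \<le> m \<and> l \<in> J}"

lemma F1_eq_mat_of_map:
  assumes h: "2 * half = (1::'a::comm_ring_1)" and "1 \<le> i" "i \<le> m"
  shows "F1 (2*m+1) i l = mat_of_map m (E_alpha_vec m (\<lambda>j. if j = i then - (2 * l) else (0::'a)))"
proof -
  have "l = - (half * - (2 * l))" by (simp add: half_double[OF h])
  then show ?thesis using mat_of_map_E_alpha_vec_single[OF assms, of "- (2 * l)"] by simp
qed

lemma F2_eq_mat_of_map:
  assumes h: "2 * half = (1::'a::comm_ring_1)" and "1 \<le> i" "i \<le> m"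
  shows "F2 (2*m+1) i l = mat_of_map m (E_beta_vec m (\<lambda>j. if j = i then - (2 * l) else (0::'a)))"
proof -
  have "l = - (half * - (2 * l))" by (simp add: half_double[OF h])
  then show ?thesis using mat_of_map_E_beta_vec_single[OF assms, of "- (2 * l)"] by simp
qed

lemma invertible_odd_generators:
  assumes h: "2 * half = (1::'a::comm_ring_1)"
  shows "invertible_mats (2*m+1) (odd_generators m (J::'a set))"
  unfolding invertible_mats_def
proof (intro conjI ballI)
  show "odd_generators m J \<subseteq> carrier_mat (2*m+1) (2*m+1)"
    unfolding odd_generators_def by (auto simp: F1_def F2_def emat_def)
next
  fix A assume "A \<in> odd_generators m J"
  then obtain i l where i: "1 \<le> i" "i \<le> m" and "A = F1 (2*m+1) i l \<or> A = F2 (2*m+1) i l"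
    unfolding odd_generators_def by blast
  moreover have "(\<lambda>j. if j = i then - (2 * l) else (0::'a)) \<in> Pm m"
    using i by (simp add: Pm_def)
  ultimately show "\<exists>B\<in>carrier_mat (2*m+1) (2*m+1). A * B = 1\<^sub>m (2*m+1) \<and> B * A = 1\<^sub>m (2*m+1)"
    using F1_eq_mat_of_map[OF h i] F2_eq_mat_of_map[OF h i]
      mat_of_map_invertible[where E = "E_alpha_vec m", OF qlinear_E_alpha_vec
        E_alpha_vec_inverse[OF h] E_alpha_vec_qspace]
      mat_of_map_invertible[where E = "E_beta_vec m", OF qlinear_E_beta_vec
        E_beta_vec_inverse[OF h] E_beta_vec_qspace]
    by metis
qed

lemma odd_generators_subset_dser_generators:
  assumes h: "2 * half = (1::'a::comm_ring_1)" and J: "is_ideal (J::'a set)"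
  shows "odd_generators m J \<subseteq> dser_generators m J"
proof
  fix A assume "A \<in> odd_generators m J"
  then obtain i l where i: "1 \<le> i" "i \<le> m" and l: "l \<in> J"
    and A: "A = F1 (2*m+1) i l \<or> A = F2 (2*m+1) i l"
    unfolding odd_generators_def by blast
  define \<alpha> where "\<alpha> = (\<lambda>z::'a. \<lambda>j. if j = i then z * - (2 * l) else 0)"
  have lin: "lin_map m \<alpha>"
    using i by (auto simp: lin_map_def \<alpha>_def Pm_def algebra_simps)
  have "\<alpha> z j \<in> J" for z j
    using ideal_mult[OF J l, of "- (2 * z)"] ideal_mult[OF J l, of 0]
    by (simp add: \<alpha>_def algebra_simps)
  moreover have "\<alpha> 1 = (\<lambda>j. if j = i then - (2 * l) else 0)"
    by (simp add: \<alpha>_def fun_eq_iff)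
  then have "F1 (2*m+1) i l = mat_of_map m (E_alpha m \<alpha>)"
    and "F2 (2*m+1) i l = mat_of_map m (E_beta m \<alpha>)"
    by (simp_all only: F1_eq_mat_of_map[OF h i] F2_eq_mat_of_map[OF h i]
        E_alpha_eq[OF h lin] E_beta_eq[OF h lin])
  ultimately show "A \<in> dser_generators m J"
    using A lin unfolding dser_generators_def by blast
qed

lemma dser_generators_subset_gen_grp:
  assumes h: "2 * half = (1::'a::comm_ring_1)" and J: "is_ideal (J::'a set)"
  shows "dser_generators m J \<subseteq> gen_grp (2*m+1) (odd_generators m J)"
proof -
  let ?G = "gen_grp (2*m+1) (odd_generators m J)"
  have carrier: "odd_generators m J \<subseteq> carrier_mat (2*m+1) (2*m+1)"
    using invertible_odd_generators[OF h] unfolding invertible_mats_def by blast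
  have F_mem: "F1 (2*m+1) i l \<in> ?G" "F2 (2*m+1) i l \<in> ?G"
    if "1 \<le> i" "i \<le> m" "l \<in> J" for i l
    using that carrier unfolding odd_generators_def by (blast intro: gen_grp_generator)+
  have "- (half * c) \<in> J" if "c \<in> J" for c
    using J that by (intro ideal_minus ideal_mult)
  then have single: "mat_of_map m (E_alpha_vec m (\<lambda>j. if j = i then c else 0)) \<in> ?G"
    "mat_of_map m (E_beta_vec m (\<lambda>j. if j = i then c else 0)) \<in> ?G"
    if "1 \<le> i" "i \<le> m" "c \<in> J" for i c
    using that F_mem
    by (simp_all only: mat_of_map_E_alpha_vec_single[OF h] mat_of_map_E_beta_vec_single[OF h])
  have "mat_of_map m (E_alpha_vec m a) \<in> ?G" "mat_of_map m (E_beta_vec m a) \<in> ?G"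
    if "a \<in> Pm m" "\<And>j. a j \<in> J" for a
    using mat_of_map_mem_by_singles[where E = "E_alpha_vec m", OF J qlinear_E_alpha_vec
        E_alpha_vec_qspace E_alpha_vec_zero E_alpha_vec_decomp[OF h] single(1)
        gen_grp.gen_one gen_grp_mult[OF carrier] that]
      mat_of_map_mem_by_singles[where E = "E_beta_vec m", OF J qlinear_E_beta_vec
        E_beta_vec_qspace E_beta_vec_zero E_beta_vec_decomp[OF h] single(2)
        gen_grp.gen_one gen_grp_mult[OF carrier] that]
    by blast+
  moreover have "\<alpha> 1 \<in> Pm m" if "lin_map m \<alpha>" for \<alpha> :: "'a \<Rightarrow> nat \<Rightarrow> 'a"
    using that unfolding lin_map_def by blast
  ultimately show ?thesis
    unfolding dser_generators_def by (auto simp: E_alpha_eq[OF h] E_beta_eq[OF h])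
qed

lemma EO_DSER_eq_EO_odd:
  assumes h: "2 * half = (1::'a::comm_ring_1)" and J: "is_ideal (J::'a set)"
  shows "EO_DSER m J = EO_odd m J"
proof -
  have "mat_of_map m \<phi> \<in> carrier_mat (2*m+1) (2*m+1)" for \<phi> :: "'a qelem \<Rightarrow> 'a qelem"
    by (simp add: mat_of_map_def)
  then have "dser_generators m J \<subseteq> carrier_mat (2*m+1) (2*m+1)"
    unfolding dser_generators_def by blast
  then have "gen_grp (2*m+1) (dser_generators m J) = gen_grp (2*m+1) (odd_generators m J)"
    by (intro subset_antisym gen_grp_subset_gen_grp invertible_odd_generators
        dser_generators_subset_gen_grp gen_grp_mono odd_generators_subset_dser_generators h J)
  then show ?thesis
    unfolding EO_DSER_def EO_odd_def dser_generators_def odd_generators_def .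
qed

theorem mainTheorem5:
  fixes I :: "'a::comm_ring_1 set" and m :: nat
  assumes two_inv: "\<exists>u::'a. 2 * u = 1"
    and ideal: "is_ideal I"
    and m: "m \<ge> 1"
  shows "EO_DSER_rel m I = EO_odd_rel m I"
proof -
  have h: "2 * half = (1::'a)" by (rule half_eq[OF two_inv])
  have "is_ideal (UNIV :: 'a set)" by (simp add: is_ideal_def)
  then show ?thesis
    unfolding EO_DSER_rel_def EO_odd_rel_def
    by (simp only: EO_DSER_eq_EO_odd[OF h ideal] EO_DSER_eq_EO_odd[OF h])
qed

end
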